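(* The Markov spectrum of $\mathbb{Q}((1/T))$ is $\mathcal{M}=\{1,2,3,\dots\}\cup\{\infty\}$.
   Context: $\mathbb{Q}((1/T))$ is the field of formal Laurent series $\sum_{i=-\infty}^m a_iT^i$ with $a_i\in\mathbb{Q}$. For nonzero $\alpha$ with leading term $a_mT^m$, $a_m\ne0$, set $\deg\alpha=m$, and $\deg0=-\infty$. A binary quadratic form over $\mathbb{Q}((1/T))$ is $Q(X,Y)=AX^2+BXY+CY^2$ with $A,B,C\in\mathbb{Q}((1/T))$ not all in $\mathbb{Q}(T)$; its discriminant is $D=B^2-4AC$. It is indefinite if $D\neq0$ and $D$ is a square in $\mathbb{Q}((1/T))$. Put $m(Q)=\inf\{\deg Q(X,Y): X,Y\in\mathbb{Q}[T],\ (X,Y)\ne(0,0)\}\in\mathbb{Z}\cup\{-\infty\}$. The Markov spectrum is $\mathcal{M}=\{\tfrac{\deg D}{2}-m(Q): Q \text{ an indefinite binary quadratic form}\}$, where the value is $+\infty$ when $m(Q)=-\infty$. *)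

theory Defs
  imports "HOL-Computational_Algebra.Formal_Laurent_Series" "HOL-Computational_Algebra.Polynomial"
    "HOL-Library.Extended_Real"
begin

text \<open>The field Q((1/T)) is modelled as rat fls, Laurent series in X = 1/T with
  finitely many negative powers of X (= finitely many positive powers of T).
  T itself is fls_X_inv.\<close>

type_synonym QT = "rat fls"

definition poly_emb :: "rat poly \<Rightarrow> QT" where
  "poly_emb p = (\<Sum>i\<le>degree p. fls_const (coeff p i) * fls_X_inv ^ i)"

definition degT :: "QT \<Rightarrow> ereal" where
  "degT a = (if a = 0 then -\<infinity> else ereal (real_of_int (- fls_subdegree a)))"

definition in_QT_rat :: "QT \<Rightarrow> bool" where
  "in_QT_rat a \<longleftrightarrow> (\<exists>p q. q \<noteq> 0 \<and> a * poly_emb q = poly_emb p)"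

definition qform :: "QT \<Rightarrow> QT \<Rightarrow> QT \<Rightarrow> QT \<Rightarrow> QT \<Rightarrow> QT" where
  "qform A B C x y = A * x^2 + B * x * y + C * y^2"

definition is_bqf :: "QT \<Rightarrow> QT \<Rightarrow> QT \<Rightarrow> bool" where
  "is_bqf A B C \<longleftrightarrow> \<not> (in_QT_rat A \<and> in_QT_rat B \<and> in_QT_rat C)"

definition disc :: "QT \<Rightarrow> QT \<Rightarrow> QT \<Rightarrow> QT" where
  "disc A B C = B^2 - 4 * A * C"

definition indefinite :: "QT \<Rightarrow> QT \<Rightarrow> QT \<Rightarrow> bool" where
  "indefinite A B C \<longleftrightarrow> disc A B C \<noteq> 0 \<and> (\<exists>s. disc A B C = s^2)"

definition min_deg :: "QT \<Rightarrow> QT \<Rightarrow> QT \<Rightarrow> ereal" where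
  "min_deg A B C = Inf {degT (qform A B C (poly_emb X) (poly_emb Y)) | X Y :: rat poly.
      X \<noteq> 0 \<or> Y \<noteq> 0}"

definition markov_value :: "QT \<Rightarrow> QT \<Rightarrow> QT \<Rightarrow> ereal" where
  "markov_value A B C = degT (disc A B C) / 2 - min_deg A B C"

definition markov_spectrum :: "ereal set" where
  "markov_spectrum = {markov_value A B C | A B C. is_bqf A B C \<and> indefinite A B C}"

end

(*
  Let Q = AX^2 + BXY + CY^2 with D = s^2, s \<noteq> 0. If A \<noteq> 0 then Q = A (X - \<theta>\<^sub>1 Y)(X - \<theta>\<^sub>2 Y)
  with \<theta>\<^sub>1 - \<theta>\<^sub>2 = s/A. Solving N homogeneous linear equations in the N + 1 coefficients of Y
  gives a Dirichlet approximation with deg Y \<le> N and deg (X - \<theta>\<^sub>1 Y) < -N; for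
  N = max 0 (deg A - deg s) this forces deg Q(X, Y) < deg s = deg D / 2. As all degrees are integers,
  every Markov value is a positive integer or \<infinity>.

  Conversely, let \<gamma> be the lacunary series \<Sum>\<^sub>j T^(-2^j), which is not rational. The form \<gamma> XY
  represents 0 and has value \<infinity>. For E = T^(2k+1) (T + 1) = (T^(k+1))^2 (1 + 1/T), a square in
  Q((1/T)), the form \<gamma> (X^2 - E Y^2) is indefinite, and X^2 - E Y^2 is a nonzero polynomial
  for (X, Y) \<noteq> 0 because E has odd order at 0; so its value is deg E / 2 = k + 1.
*)

theory Submission
  imports Defs "Jordan_Normal_Form.Determinant"
begin

lemma homogeneous_system_nontrivial_solution:
  fixes a :: "nat \<Rightarrow> nat \<Rightarrow> 'a::field"
  assumes "m < n"
  shows "\<exists>c. (\<exists>i<n. c i \<noteq> 0) \<and> (\<forall>j<m. (\<Sum>i<n. a j i * c i) = 0)"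
proof -
  define M where "M = mat n n (\<lambda>(j, i). if j < m then a j i else 0)"
  have M: "M \<in> carrier_mat n n" by (simp add: M_def)
  have "M = mat\<^sub>r n n (\<lambda>j. if j = m then 0\<^sub>v n else row M j)"
    by (rule eq_matI) (auto simp: M_def)
  also have "det \<dots> = 0" by (rule det_row_0) (auto simp: M_def assms)
  finally obtain v where v: "v \<in> carrier_vec n" "v \<noteq> 0\<^sub>v n" "M *\<^sub>v v = 0\<^sub>v n"
    using det_0_iff_vec_prod_zero_field[OF M] by blast
  have "\<exists>i<n. vec_index v i \<noteq> 0" using v(1,2) by (auto simp: vec_eq_iff)
  moreover have "(\<Sum>i<n. a j i * vec_index v i) = 0" if "j < m" for j
  proof -
    have "vec_index (M *\<^sub>v v) j = 0" using v(3) that assms by simp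
    then show ?thesis
      using that assms v(1) by (simp add: M_def mult_mat_vec_def scalar_prod_def atLeast0LessThan)
  qed
  ultimately show ?thesis by blast
qed

(* The matrix library's notation for entries clashes with the one for Laurent series. *)
no_notation index_mat (infixl \<open>$$\<close> 100) and vec_index (infixl \<open>$\<close> 100)
unbundle fps_syntax

lemma poly_emb_nth: "poly_emb p $$ n = (if n \<le> 0 then coeff p (nat (- n)) else 0)"
proof -
  have "poly_emb p $$ n = (\<Sum>i\<le>degree p. if n = - int i then coeff p i else 0)"
    unfolding poly_emb_def fls_nth_sum by (simp add: if_distrib[of "(*) _"] cong: if_cong)
  also have "\<dots> = (if n \<le> 0 then coeff p (nat (- n)) else 0)"
  proof (cases "n \<le> 0")
    case True
    then have "n = - int i \<longleftrightarrow> i = nat (- n)" for i by auto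
    with True show ?thesis by (simp add: coeff_eq_0)
  qed simp
  finally show ?thesis .
qed

lemma poly_emb_0 [simp]: "poly_emb 0 = 0"
  by (rule fls_eqI) (simp add: poly_emb_nth)

lemma poly_emb_1 [simp]: "poly_emb 1 = 1"
  by (rule fls_eqI) (auto simp: poly_emb_nth coeff_1)

lemma poly_emb_add: "poly_emb (p + q) = poly_emb p + poly_emb q"
  by (rule fls_eqI) (simp add: poly_emb_nth)

lemma poly_emb_diff: "poly_emb (p - q) = poly_emb p - poly_emb q"
  by (rule fls_eqI) (simp add: poly_emb_nth)

lemma poly_emb_smult: "poly_emb (Polynomial.smult a p) = fls_const a * poly_emb p"
  by (rule fls_eqI) (simp add: poly_emb_nth)

lemma poly_emb_pCons: "poly_emb (pCons a p) = fls_const a + fls_X_inv * poly_emb p"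
  by (rule fls_eqI)
    (auto simp: poly_emb_nth coeff_pCons fls_X_inv_times_conv_shift nat_diff_distrib' split: nat.split)

lemma poly_emb_mult: "poly_emb (p * q) = poly_emb p * poly_emb q"
proof (induction p)
  case (pCons a p)
  have "poly_emb (pCons a p * q) = poly_emb (Polynomial.smult a q + pCons 0 (p * q))" by simp
  also have "\<dots> = (fls_const a + fls_X_inv * poly_emb p) * poly_emb q"
    by (simp only: poly_emb_add poly_emb_smult poly_emb_pCons pCons.IH) (simp add: algebra_simps)
  finally show ?case by (simp only: poly_emb_pCons)
qed simp

lemma poly_emb_power: "poly_emb (p ^ n) = poly_emb p ^ n"
  by (induction n) (simp_all add: poly_emb_mult)

lemma poly_emb_eq_0_iff [simp]: "poly_emb p = 0 \<longleftrightarrow> p = 0"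
  by (metis poly_emb_0 poly_emb_nth fls_zero_nth leading_coeff_0_iff nat_int neg_0_le_iff_le
      of_nat_0_le_iff minus_minus)

lemma fls_subdegree_poly_emb: "p \<noteq> 0 \<Longrightarrow> fls_subdegree (poly_emb p) = - int (degree p)"
  by (rule fls_subdegree_eqI) (auto simp: poly_emb_nth coeff_eq_0)

lemma fls_nth_mult_poly_emb:
  assumes "degree q \<le> K"
  shows "(\<theta> * poly_emb q) $$ n = (\<Sum>i\<le>K. coeff q i * \<theta> $$ (n + int i))"
proof -
  have "poly_emb q = (\<Sum>i\<le>K. fls_const (coeff q i) * fls_X_inv ^ i)"
    unfolding poly_emb_def by (rule sum.mono_neutral_left) (use assms in \<open>auto simp: coeff_eq_0\<close>)
  then have "\<theta> * poly_emb q = (\<Sum>i\<le>K. fls_const (coeff q i) * (fls_X_inv ^ i * \<theta>))"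
    by (simp only: sum_distrib_left ac_simps)
  also have "\<dots> = (\<Sum>i\<le>K. fls_const (coeff q i) * fls_shift (int i) \<theta>)"
    by (simp only: fls_X_inv_power_times_conv_shift)
  finally show ?thesis by (simp add: fls_nth_sum)
qed

(* The valuation of a in 1/T is at least k, i.e. deg a \<le> -k. *)
definition vanishes_below :: "'a::zero fls \<Rightarrow> int \<Rightarrow> bool" where
  "vanishes_below a k \<longleftrightarrow> (\<forall>n<k. a $$ n = 0)"

lemma vanishes_below_iff: "vanishes_below a k \<longleftrightarrow> a = 0 \<or> k \<le> fls_subdegree a"
  by (auto simp: vanishes_below_def intro: fls_subdegree_geI)

lemma vanishes_below_add:
  "vanishes_below a k \<Longrightarrow> vanishes_below b k \<Longrightarrow> vanishes_below (a + b) k"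
  by (simp add: vanishes_below_def)

lemma vanishes_below_mono: "vanishes_below a k \<Longrightarrow> j \<le> k \<Longrightarrow> vanishes_below a j"
  by (simp add: vanishes_below_def)

lemma vanishes_below_mult:
  fixes a b :: "'a::semiring_no_zero_divisors fls"
  shows "vanishes_below a i \<Longrightarrow> vanishes_below b j \<Longrightarrow> vanishes_below (a * b) (i + j)"
  by (cases "a = 0 \<or> b = 0") (auto simp: vanishes_below_iff)

lemma degT_le_if_vanishes_below: "vanishes_below a k \<Longrightarrow> degT a \<le> ereal (- k)"
  by (auto simp: vanishes_below_iff degT_def)

lemma vanishes_below_poly_emb: "degree p \<le> N \<Longrightarrow> vanishes_below (poly_emb p) (- int N)"
  by (auto simp: vanishes_below_def poly_emb_nth coeff_eq_0)

lemma poly_emb_polynomial_part: "\<exists>x. vanishes_below (\<phi> - poly_emb x) 1"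
proof
  define M where "M = nat (- fls_subdegree \<phi>)"
  define x where "x = (\<Sum>m\<le>M. monom (\<phi> $$ (- int m)) m)"
  have coeff_x: "coeff x m = (if m \<le> M then \<phi> $$ (- int m) else 0)" for m
    by (simp add: x_def coeff_sum coeff_monom)
  show "vanishes_below (\<phi> - poly_emb x) 1"
    unfolding vanishes_below_def
  proof (intro allI impI)
    fix n :: int
    assume "n < 1"
    then show "(\<phi> - poly_emb x) $$ n = 0"
      by (cases "nat (- n) \<le> M") (auto simp: poly_emb_nth coeff_x M_def)
  qed
qed

lemma dirichlet_approximation:
  "\<exists>x y. y \<noteq> 0 \<and> degree y \<le> N \<and> vanishes_below (poly_emb x - \<theta> * poly_emb y) (int N + 1)"
proof -
  \<comment> \<open>the coefficients of y are chosen to kill those of 1/T, ..., 1/T^N in \<theta> y\<close>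
  obtain c where c: "\<exists>i<Suc N. c i \<noteq> 0"
    "\<forall>j<N. (\<Sum>i<Suc N. \<theta> $$ (int j + 1 + int i) * c i) = 0"
    using homogeneous_system_nontrivial_solution[of N "Suc N" "\<lambda>j i. \<theta> $$ (int j + 1 + int i)"]
    by auto
  define y where "y = (\<Sum>i\<le>N. monom (c i) i)"
  have coeff_y: "coeff y i = (if i \<le> N then c i else 0)" for i
    by (simp add: y_def coeff_sum coeff_monom)
  have "y \<noteq> 0"
    using c(1) coeff_y by (metis coeff_0 less_Suc_eq_le)
  have deg_y: "degree y \<le> N"
    by (rule degree_le) (simp add: coeff_y)
  obtain x where x: "vanishes_below (\<theta> * poly_emb y - poly_emb x) 1"
    using poly_emb_polynomial_part by blast
  have "(poly_emb x - \<theta> * poly_emb y) $$ n = 0" if "n < int N + 1" for n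
  proof (cases "n \<le> 0")
    case True
    with x show ?thesis by (simp add: vanishes_below_def)
  next
    case False
    define j where "j = nat (n - 1)"
    have j: "n = int j + 1" "j < N"
      using False that by (auto simp: j_def)
    have "(\<theta> * poly_emb y) $$ n = (\<Sum>i<Suc N. \<theta> $$ (int j + 1 + int i) * c i)"
      by (simp add: fls_nth_mult_poly_emb[OF deg_y] coeff_y j(1) lessThan_Suc_atMost mult.commute)
    with c(2) j False show ?thesis by (simp add: poly_emb_nth)
  qed
  with \<open>y \<noteq> 0\<close> deg_y show ?thesis
    unfolding vanishes_below_def by blast
qed

lemma indefinite_form_small_value:
  assumes disc: "disc A B C = s ^ 2" and "s \<noteq> 0"
  shows "\<exists>X Y. (X \<noteq> 0 \<or> Y \<noteq> 0) \<and>
    vanishes_below (qform A B C (poly_emb X) (poly_emb Y)) (fls_subdegree s + 1)"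
proof (cases "A = 0")
  case True
  then have "qform A B C (poly_emb 1) (poly_emb 0) = 0" by (simp add: qform_def)
  then show ?thesis by (intro exI[of _ 1] exI[of _ 0]) (simp add: vanishes_below_def)
next
  case False
  define \<theta>\<^sub>1 where "\<theta>\<^sub>1 = (- B + s) / (2 * A)"
  define \<theta>\<^sub>2 where "\<theta>\<^sub>2 = (- B - s) / (2 * A)"
  have C_eq: "C = (B\<^sup>2 - s\<^sup>2) / (4 * A)" using disc False by (simp add: disc_def field_simps)
  have factor: "qform A B C x y = A * ((x - \<theta>\<^sub>1 * y) * (x - \<theta>\<^sub>2 * y))" for x y
    unfolding qform_def C_eq \<theta>\<^sub>1_def \<theta>\<^sub>2_def using False by (simp add: field_simps power2_eq_square)
  define N where "N = nat (fls_subdegree s - fls_subdegree A)"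
  obtain X Y where "Y \<noteq> 0" and deg_Y: "degree Y \<le> N"
    and approx: "vanishes_below (poly_emb X - \<theta>\<^sub>1 * poly_emb Y) (int N + 1)"
    using dirichlet_approximation by blast
  have "poly_emb X - \<theta>\<^sub>2 * poly_emb Y = (poly_emb X - \<theta>\<^sub>1 * poly_emb Y) + s / A * poly_emb Y"
    unfolding \<theta>\<^sub>1_def \<theta>\<^sub>2_def using False by (simp add: field_simps)
  also have "vanishes_below \<dots> (fls_subdegree s - fls_subdegree A - int N)"
  proof (rule vanishes_below_add)
    show "vanishes_below (poly_emb X - \<theta>\<^sub>1 * poly_emb Y) (fls_subdegree s - fls_subdegree A - int N)"
      by (rule vanishes_below_mono[OF approx]) (simp add: N_def)
    have "vanishes_below (s / A) (fls_subdegree s - fls_subdegree A)"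
      using False \<open>s \<noteq> 0\<close> by (simp add: vanishes_below_iff divide_inverse)
    from vanishes_below_mult[OF this vanishes_below_poly_emb[OF deg_Y]]
    show "vanishes_below (s / A * poly_emb Y) (fls_subdegree s - fls_subdegree A - int N)"
      by simp
  qed
  finally have "vanishes_below (A * ((poly_emb X - \<theta>\<^sub>1 * poly_emb Y) * (poly_emb X - \<theta>\<^sub>2 * poly_emb Y)))
      (fls_subdegree A + ((int N + 1) + (fls_subdegree s - fls_subdegree A - int N)))"
    by (intro vanishes_below_mult approx) (simp add: vanishes_below_iff)
  then show ?thesis
    using \<open>Y \<noteq> 0\<close> by (auto simp: factor algebra_simps)
qed

lemma min_deg_le: "X \<noteq> 0 \<or> Y \<noteq> 0 \<Longrightarrow> min_deg A B C \<le> degT (qform A B C (poly_emb X) (poly_emb Y))"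
  unfolding min_deg_def by (rule Inf_lower) blast

lemma min_deg_greatest:
  "(\<And>X Y. X \<noteq> 0 \<or> Y \<noteq> 0 \<Longrightarrow> d \<le> degT (qform A B C (poly_emb X) (poly_emb Y))) \<Longrightarrow> d \<le> min_deg A B C"
  unfolding min_deg_def by (rule Inf_greatest) blast

lemma Inf_ereal_of_int_attained:
  fixes S :: "ereal set"
  assumes "S \<noteq> {}" and int_valued: "\<And>z. z \<in> S \<Longrightarrow> z = - \<infinity> \<or> (\<exists>k::int. z = ereal k)"
  shows "Inf S = - \<infinity> \<or> Inf S \<in> S"
proof (cases "Inf S = - \<infinity>")
  case False
  obtain z0 where "z0 \<in> S" using assms(1) by blast
  then have "Inf S \<noteq> \<infinity>"
    using int_valued[of z0] Inf_lower[of z0 S] by auto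
  with False obtain r where r: "Inf S = ereal r" by (cases "Inf S") auto
  then obtain z where "z \<in> S" "z < ereal (r + 1)"
    using Inf_less_iff[of S "ereal (r + 1)"] by auto
  moreover from this obtain k :: int where k: "z = ereal k"
    using int_valued[of z] Inf_lower[of z S] r by auto
  ultimately have "k < r + 1" by simp
  have "ereal k \<le> w" if w: "w \<in> S" for w
  proof -
    have "ereal r \<le> w" using w r by (metis Inf_lower)
    moreover obtain l :: int where "w = ereal l"
      using int_valued[OF w] calculation by auto
    ultimately show ?thesis using \<open>k < r + 1\<close> by simp
  qed
  then have "Inf S = z"
    using \<open>z \<in> S\<close> k by (metis Inf_greatest Inf_lower antisym)
  with \<open>z \<in> S\<close> show ?thesis by simp
qed simp

lemma degT_cases: "degT a = - \<infinity> \<or> (\<exists>k::int. degT a = ereal k)"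
  by (auto simp: degT_def intro: exI[of _ "- fls_subdegree a"])

lemma min_deg_cases: "min_deg A B C = - \<infinity> \<or> (\<exists>k::int. min_deg A B C = ereal k)"
proof -
  let ?S = "{degT (qform A B C (poly_emb X) (poly_emb Y)) | X Y. X \<noteq> 0 \<or> Y \<noteq> 0}"
  have int_valued: "z = - \<infinity> \<or> (\<exists>k::int. z = ereal k)" if "z \<in> ?S" for z
    using that degT_cases by blast
  have "degT (qform A B C (poly_emb 1) (poly_emb 0)) \<in> ?S"
    by (rule CollectI, rule exI[of _ 1], rule exI[of _ 0]) simp
  then have "?S \<noteq> {}" by blast
  then have "Inf ?S = - \<infinity> \<or> Inf ?S \<in> ?S"
    using int_valued by (rule Inf_ereal_of_int_attained)
  then show ?thesis
    using int_valued unfolding min_deg_def by blast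
qed

lemma markov_value_indefinite:
  assumes "indefinite A B C"
  shows "markov_value A B C \<in> {ereal (real n) | n :: nat. n \<ge> 1} \<union> {\<infinity>}"
proof -
  obtain s where disc: "disc A B C = s ^ 2" and "s \<noteq> 0"
    using assms unfolding indefinite_def by auto
  define e where "e = - fls_subdegree s"
  have value_eq: "markov_value A B C = ereal e - min_deg A B C"
    using \<open>s \<noteq> 0\<close> by (simp add: markov_value_def disc degT_def e_def fls_subdegree_pow)
  obtain X Y where "X \<noteq> 0 \<or> Y \<noteq> 0"
    and small: "vanishes_below (qform A B C (poly_emb X) (poly_emb Y)) (fls_subdegree s + 1)"
    using indefinite_form_small_value[OF disc \<open>s \<noteq> 0\<close>] by blast
  have "min_deg A B C \<le> degT (qform A B C (poly_emb X) (poly_emb Y))"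
    using \<open>X \<noteq> 0 \<or> Y \<noteq> 0\<close> by (rule min_deg_le)
  also have "\<dots> \<le> ereal (e - 1)"
    using degT_le_if_vanishes_below[OF small] by (simp add: e_def)
  finally have "min_deg A B C \<le> ereal (e - 1)" .
  with min_deg_cases consider "min_deg A B C = - \<infinity>"
    | k :: int where "min_deg A B C = ereal k" "k \<le> e - 1"
    by force
  then show ?thesis
  proof cases
    case (2 k)
    then have "markov_value A B C = ereal (real (nat (e - k)))" "nat (e - k) \<ge> 1"
      by (simp_all add: value_eq)
    then show ?thesis by blast
  qed (simp add: value_eq)
qed

definition gap_series :: QT where
  "gap_series = fps_to_fls (Abs_fps (\<lambda>n. if \<exists>j. n = 2 ^ j then 1 else 0))"

lemma gap_series_nth: "n \<ge> 0 \<Longrightarrow> gap_series $$ n = (if \<exists>j. nat n = 2 ^ j then 1 else 0)"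
  by (simp add: gap_series_def)

lemma gap_series_nonzero: "gap_series \<noteq> 0"
proof
  assume "gap_series = 0"
  moreover have "gap_series $$ 1 = 1"
    by (auto simp: gap_series_nth intro: exI[of _ 0])
  ultimately show False by simp
qed

lemma not_power_of_two_between:
  fixes m :: nat
  assumes "2 ^ k < m" "m < 2 ^ Suc k"
  shows "m \<noteq> 2 ^ j"
proof
  assume "m = 2 ^ j"
  with assms have "k < j" "j < Suc k"
    using power_strict_increasing_iff[of "2::nat" k j] power_strict_increasing_iff[of "2::nat" j "Suc k"]
    by simp_all
  then show False by simp
qed

lemma gap_series_not_rational: "\<not> in_QT_rat gap_series"
proof
  assume "in_QT_rat gap_series"
  then obtain p q where "q \<noteq> 0" and eq: "gap_series * poly_emb q = poly_emb p"
    unfolding in_QT_rat_def by blast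
  define d where "d = degree q"
  define J where "J = Suc d"
  define n where "n = 2 ^ J - d"
  have "d < 2 ^ d" by (rule less_exp)
  then have n: "0 < n" "n + d = 2 ^ J" "2 ^ d < n"
    unfolding n_def J_def power_Suc by linarith+
  have "(gap_series * poly_emb q) $$ int n = (\<Sum>i\<le>d. coeff q i * gap_series $$ (int n + int i))"
    by (simp add: fls_nth_mult_poly_emb d_def)
  also have "\<dots> = (\<Sum>i\<le>d. if i = d then coeff q i else 0)"
  proof (rule sum.cong[OF refl])
    fix i
    assume "i \<in> {..d}"
    have "n + i \<noteq> 2 ^ j" if "i < d" for j
      using n that not_power_of_two_between[of d "n + i" j] unfolding J_def by simp
    with \<open>i \<in> {..d}\<close> n(2)
    show "coeff q i * gap_series $$ (int n + int i) = (if i = d then coeff q i else 0)"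
      by (auto simp: gap_series_nth nat_add_distrib)
  qed
  also have "\<dots> = lead_coeff q" by (simp add: d_def)
  finally show False
    using eq \<open>q \<noteq> 0\<close> n(1) by (simp add: poly_emb_nth)
qed

lemma infinity_in_markov_spectrum: "\<infinity> \<in> markov_spectrum"
proof -
  have "min_deg 0 gap_series 0 \<le> degT (qform 0 gap_series 0 (poly_emb 1) (poly_emb 0))"
    by (rule min_deg_le) simp
  then have "min_deg 0 gap_series 0 = - \<infinity>" by (simp add: qform_def degT_def)
  moreover have "disc 0 gap_series 0 = gap_series ^ 2" by (simp add: disc_def)
  ultimately have "markov_value 0 gap_series 0 = \<infinity>" "indefinite 0 gap_series 0"
    using gap_series_nonzero by (auto simp: markov_value_def degT_def indefinite_def)
  moreover have "is_bqf 0 gap_series 0"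
    using gap_series_not_rational by (simp add: is_bqf_def)
  ultimately show ?thesis unfolding markov_spectrum_def by force
qed

lemma square_ne_times_square_if_odd_order:
  fixes E X Y :: "'a::idom poly"
  assumes "E \<noteq> 0" "odd (order a E)" "X \<noteq> 0 \<or> Y \<noteq> 0"
  shows "X ^ 2 \<noteq> E * Y ^ 2"
proof
  assume eq: "X ^ 2 = E * Y ^ 2"
  with assms have "X \<noteq> 0" "Y \<noteq> 0" by auto
  then have "2 * order a X = order a E + 2 * order a Y"
    using arg_cong[OF eq, of "order a"] \<open>E \<noteq> 0\<close> by (simp add: order_mult power2_eq_square)
  with assms(2) show False by presburger
qed

lemma min_deg_anisotropic_norm_form:
  assumes "\<gamma> \<noteq> 0" and anisotropic: "\<And>X Y. X \<noteq> 0 \<or> Y \<noteq> 0 \<Longrightarrow> X ^ 2 \<noteq> E * Y ^ 2"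
  shows "min_deg \<gamma> 0 (- (\<gamma> * poly_emb E)) = degT \<gamma>"
proof (rule antisym)
  have form: "qform \<gamma> 0 (- (\<gamma> * poly_emb E)) (poly_emb X) (poly_emb Y) = \<gamma> * poly_emb (X ^ 2 - E * Y ^ 2)"
    for X Y
    by (simp add: qform_def poly_emb_diff poly_emb_mult poly_emb_power algebra_simps)
  have "min_deg \<gamma> 0 (- (\<gamma> * poly_emb E)) \<le> degT (qform \<gamma> 0 (- (\<gamma> * poly_emb E)) (poly_emb 1) (poly_emb 0))"
    by (rule min_deg_le) simp
  then show "min_deg \<gamma> 0 (- (\<gamma> * poly_emb E)) \<le> degT \<gamma>"
    by (simp add: qform_def)
  show "degT \<gamma> \<le> min_deg \<gamma> 0 (- (\<gamma> * poly_emb E))"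
  proof (rule min_deg_greatest)
    fix X Y :: "rat poly"
    assume "X \<noteq> 0 \<or> Y \<noteq> 0"
    then have "X ^ 2 - E * Y ^ 2 \<noteq> 0" using anisotropic by simp
    with \<open>\<gamma> \<noteq> 0\<close> show "degT \<gamma> \<le> degT (qform \<gamma> 0 (- (\<gamma> * poly_emb E)) (poly_emb X) (poly_emb Y))"
      by (simp add: form degT_def fls_subdegree_poly_emb)
  qed
qed

lemma markov_value_anisotropic_norm_form:
  assumes "\<gamma> \<noteq> 0" and anisotropic: "\<And>X Y. X \<noteq> 0 \<or> Y \<noteq> 0 \<Longrightarrow> X ^ 2 \<noteq> E * Y ^ 2"
  shows "markov_value \<gamma> 0 (- (\<gamma> * poly_emb E)) = ereal (real (degree E) / 2)"
proof -
  have "E \<noteq> 0" using anisotropic[of 0 1] by auto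
  have "disc \<gamma> 0 (- (\<gamma> * poly_emb E)) = 4 * (\<gamma> * \<gamma> * poly_emb E)"
    by (simp add: disc_def algebra_simps)
  then have "degT (disc \<gamma> 0 (- (\<gamma> * poly_emb E))) / 2 = ereal (real (degree E) / 2 - fls_subdegree \<gamma>)"
    using \<open>\<gamma> \<noteq> 0\<close> \<open>E \<noteq> 0\<close> by (simp add: degT_def fls_subdegree_poly_emb field_simps)
  then show ?thesis
    using min_deg_anisotropic_norm_form[OF assms] \<open>\<gamma> \<noteq> 0\<close> by (simp add: markov_value_def degT_def)
qed

lemma fls_sqrt_one_plus_X: "(fps_to_fls (fps_binomial (1 / 2)) :: 'a::field_char_0 fls) ^ 2 = 1 + fls_X"
proof -
  have "fps_binomial (1 / 2) ^ 2 = (fps_binomial 1 :: 'a fps)"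
    by (simp add: power2_eq_square flip: fps_binomial_add_mult)
  then show ?thesis
    by (simp add: fps_binomial_1 flip: fps_to_fls_power)
qed

lemma half_degree_in_markov_spectrum:
  assumes "E \<noteq> 0" "odd (order a E)" and square: "poly_emb E = \<tau> ^ 2"
  shows "ereal (real (degree E) / 2) \<in> markov_spectrum"
proof -
  have "disc gap_series 0 (- (gap_series * poly_emb E)) = (2 * gap_series * \<tau>) ^ 2"
    by (simp add: disc_def square power2_eq_square algebra_simps)
  moreover have "disc gap_series 0 (- (gap_series * poly_emb E)) \<noteq> 0"
    using gap_series_nonzero \<open>E \<noteq> 0\<close> by (simp add: disc_def)
  ultimately have "indefinite gap_series 0 (- (gap_series * poly_emb E))"
    unfolding indefinite_def by blast
  moreover have "is_bqf gap_series 0 (- (gap_series * poly_emb E))"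
    using gap_series_not_rational by (simp add: is_bqf_def)
  moreover have "markov_value gap_series 0 (- (gap_series * poly_emb E)) = ereal (real (degree E) / 2)"
    using gap_series_nonzero square_ne_times_square_if_odd_order[OF assms(1,2)]
    by (rule markov_value_anisotropic_norm_form)
  ultimately show ?thesis unfolding markov_spectrum_def by force
qed

lemma finite_value_in_markov_spectrum: "ereal (real (Suc k)) \<in> markov_spectrum"
proof -
  define E :: "rat poly" where "E = [:0, 1:] ^ (2 * k + 1) * [:1, 1:]"
  have "E \<noteq> 0"
    unfolding E_def by (intro no_zero_divisors power_not_zero) simp_all
  have "degree E = 2 * Suc k"
    unfolding E_def by (subst degree_mult_eq) (simp_all add: degree_linear_power)
  have "order 0 E = order 0 ([:0, 1:] ^ (2 * k + 1) :: rat poly) + order 0 [:1, 1::rat:]"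
    using \<open>E \<noteq> 0\<close> unfolding E_def by (rule order_mult)
  also have "\<dots> = 2 * k + 1"
    using order_power_n_n[of "0::rat" "2 * k + 1"] order_0I[of "[:1, 1:]" "0::rat"] by simp
  finally have "odd (order 0 E)" by simp
  have "poly_emb E = fls_X_inv ^ (2 * k + 1) * (1 + fls_X_inv)"
    by (simp only: E_def poly_emb_mult poly_emb_power) (simp add: poly_emb_pCons)
  also have "\<dots> = fls_X_inv ^ (Suc k * 2) * (1 + fls_X)"
  proof -
    have "fls_X * fls_X_inv = (1 :: QT)" by (simp flip: fls_inverse_X)
    then show ?thesis by (simp add: algebra_simps)
  qed
  also have "\<dots> = (fls_X_inv ^ Suc k * fps_to_fls (fps_binomial (1 / 2))) ^ 2"
    by (simp only: fls_sqrt_one_plus_X power_mult_distrib power_mult)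
  finally have "ereal (real (degree E) / 2) \<in> markov_spectrum"
    by (rule half_degree_in_markov_spectrum[OF \<open>E \<noteq> 0\<close> \<open>odd (order 0 E)\<close>])
  moreover have "real (degree E) / 2 = real (Suc k)"
    using \<open>degree E = 2 * Suc k\<close> by simp
  ultimately show ?thesis by simp
qed

theorem corollary3:
  shows "markov_spectrum = {ereal (real n) | n :: nat. n \<ge> 1} \<union> {\<infinity>}"
proof
  show "markov_spectrum \<subseteq> {ereal (real n) | n :: nat. n \<ge> 1} \<union> {\<infinity>}"
    unfolding markov_spectrum_def using markov_value_indefinite by blast
  show "{ereal (real n) | n :: nat. n \<ge> 1} \<union> {\<infinity>} \<subseteq> markov_spectrum"
    using infinity_in_markov_spectrum finite_value_in_markov_spectrum
    by (auto simp: Suc_le_eq dest!: gr0_implies_Suc)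
qed

end
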